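(* Let $n,r\ge1$ and let $\mathbf i=(i_k)_{k\in\mathbb Z}$ be a sequence of integers with $i_{k+r}=i_k+n$ for all $k$. Let $A^{\mathbf i}=(a_{k,l})_{k,l\in\mathbb Z}$ with $a_{k,l}=\delta_{k,i_l}$. Then $d_{A^{\mathbf i}}=|\mathrm{Inv}(\mathbf i)|$, where $\mathrm{Inv}(\mathbf i)=\{(s,t)\in\mathbb Z^2\mid 1\le s\le r,\ s<t,\ i_s\ge i_t\}$.
   Context: For a matrix $A=(a_{i,j})_{i,j\in\mathbb Z}$ with entries in $\mathbb N$ satisfying $a_{i+n,j+n}=a_{i,j}$ (as is the case for $A^{\mathbf i}$), define $d_A=\sum a_{i,j}a_{k,l}$, the sum running over all $i,j,k,l\in\mathbb Z$ with $1\le i\le n$, $k\le i$ and $j<l$. *)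

theory Defs
  imports "HOL-Analysis.Analysis"
begin

definition dA_index :: "int \<Rightarrow> (int \<times> int \<times> int \<times> int) set" where
  "dA_index n = {(i, j, k, l). 1 \<le> i \<and> i \<le> n \<and> k \<le> i \<and> j < l}"

definition dA :: "int \<Rightarrow> (int \<Rightarrow> int \<Rightarrow> nat) \<Rightarrow> nat" where
  "dA n A = (\<Sum>\<^sub>\<infinity>(i, j, k, l)\<in>dA_index n. A i j * A k l)"

definition matA :: "(int \<Rightarrow> int) \<Rightarrow> int \<Rightarrow> int \<Rightarrow> nat" where
  "matA ii k l = (if k = ii l then 1 else 0)"

definition Inv :: "int \<Rightarrow> (int \<Rightarrow> int) \<Rightarrow> (int \<times> int) set" where
  "Inv r ii = {(s, t). 1 \<le> s \<and> s \<le> r \<and> s < t \<and> ii s \<ge> ii t}"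

end

theory Submission
  imports Defs
begin

text \<open>A summand of d_A for A = A^i is nonzero exactly at the tuples (i_j, j, i_l, l), so d_A counts
  the pairs j < l with 1 \<le> i_j \<le> n and i_l \<le> i_j.  Such pairs are inversions of the sequence,
  and the translations (j, l) \<mapsto> (j + m r, l + m r) preserve inversions while shifting i_j by m n.
  Each orbit of these translations therefore has exactly one member with i_j \<in> [1, n] and exactly
  one with j \<in> [1, r], which identifies the counted pairs with Inv(i).\<close>

lemma int_window_shift_iff:
  fixes x m d :: int
  assumes "d > 0"
  shows "1 \<le> x + m * d \<and> x + m * d \<le> d \<longleftrightarrow> m = - ((x - 1) div d)"
proof
  assume "1 \<le> x + m * d \<and> x + m * d \<le> d"
  then have "(x - 1 + m * d) div d = 0"
    using assms by (intro div_pos_pos_trivial) auto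
  moreover have "(x - 1 + m * d) div d = (x - 1) div d + m"
    using assms by simp
  ultimately show "m = - ((x - 1) div d)" by simp
next
  assume "m = - ((x - 1) div d)"
  then have "x + m * d = (x - 1) mod d + 1"
    using div_mult_mod_eq[of "x - 1" d] by (simp add: algebra_simps)
  moreover have "0 \<le> (x - 1) mod d" "(x - 1) mod d < d"
    using assms by simp_all
  ultimately show "1 \<le> x + m * d \<and> x + m * d \<le> d" by linarith
qed

lemma periodic_shift:
  fixes f :: "int \<Rightarrow> int"
  assumes "\<And>k. f (k + r) = f k + n"
  shows "f (k + m * r) = f k + m * n"
proof (induction m rule: int_induct[where k = 0])
  case base then show ?case by simp
next
  case (step1 m)
  have "f (k + (m + 1) * r) = f ((k + m * r) + r)" by (simp add: algebra_simps)
  also have "\<dots> = f (k + m * r) + n" by (rule assms)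
  also have "\<dots> = f k + (m + 1) * n" using step1 by (simp add: algebra_simps)
  finally show ?case .
next
  case (step2 m)
  have "f (k + m * r) = f ((k + (m - 1) * r) + r)" by (simp add: algebra_simps)
  then have "f (k + (m - 1) * r) = f (k + m * r) - n" using assms by simp
  with step2 show ?case by (simp add: algebra_simps)
qed

lemma periodic_sublevel_finite:
  fixes f :: "int \<Rightarrow> int"
  assumes "n \<ge> 1" and "r \<ge> 1"
    and "\<And>k. f (k + r) = f k + n"
  shows "finite {t. a \<le> t \<and> f t \<le> c}"
proof (rule finite_subset)
  define m0 where "m0 = Min (f ` {1..r})"
  show "{t. a \<le> t \<and> f t \<le> c} \<subseteq> {a..r + max 0 (c - m0) * r}"
  proof
    fix t assume t: "t \<in> {t. a \<le> t \<and> f t \<le> c}"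
    define q where "q = (t - 1) div r"
    have window: "1 \<le> t - q * r" "t - q * r \<le> r"
      using int_window_shift_iff[of r t "- q"] assms(2) by (simp_all add: q_def)
    then have "m0 \<le> f (t - q * r)"
      unfolding m0_def by (intro Min_le) auto
    moreover have "f t = f (t - q * r) + q * n"
      using periodic_shift[of f r n "t - q * r" q, OF assms(3)] by simp
    ultimately have "q * n \<le> c - m0" using t by simp
    moreover have "q \<le> q * n" if "q \<ge> 0"
      using that assms(1) by (simp add: mult_le_cancel_left1)
    ultimately have "q \<le> max 0 (c - m0)" by linarith
    then have "q * r \<le> max 0 (c - m0) * r"
      using assms(2) by (simp add: mult_right_mono)
    with window have "t \<le> r + max 0 (c - m0) * r" by linarith
    with t show "t \<in> {a..r + max 0 (c - m0) * r}" by simp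
  qed
qed simp

lemma finite_Inv:
  fixes ii :: "int \<Rightarrow> int"
  assumes "n \<ge> 1" and "r \<ge> 1"
    and "\<And>k. ii (k + r) = ii k + n"
  shows "finite (Inv r ii)"
proof (rule finite_subset)
  show "Inv r ii \<subseteq> (\<Union>s\<in>{1..r}. {s} \<times> {t. s \<le> t \<and> ii t \<le> ii s})"
    unfolding Inv_def by auto
  show "finite (\<Union>s\<in>{1..r}. {s} \<times> {t. s \<le> t \<and> ii t \<le> ii s})"
    using periodic_sublevel_finite[of n r ii, OF assms] by auto
qed

definition value_window_inversions :: "int \<Rightarrow> (int \<Rightarrow> int) \<Rightarrow> (int \<times> int) set" where
  "value_window_inversions n ii = {(j, l). 1 \<le> ii j \<and> ii j \<le> n \<and> j < l \<and> ii l \<le> ii j}"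

lemma bij_betw_Inv_value_window_inversions:
  fixes ii :: "int \<Rightarrow> int"
  assumes "n \<ge> 1" and "r \<ge> 1"
    and "\<And>k. ii (k + r) = ii k + n"
  defines "to_value \<equiv> \<lambda>(s, t). (s - ((ii s - 1) div n) * r, t - ((ii s - 1) div n) * r)"
    and "to_index \<equiv> \<lambda>(j, l). (j - ((j - 1) div r) * r, l - ((j - 1) div r) * r)"
  shows "bij_betw to_value (Inv r ii) (value_window_inversions n ii)"
proof (rule bij_betw_byWitness[where f' = to_index])
  note shift = periodic_shift[of ii r n, OF assms(3)]
  have value_window: "1 \<le> ii (s + m * r) \<and> ii (s + m * r) \<le> n \<longleftrightarrow> m = - ((ii s - 1) div n)" for s m
    using int_window_shift_iff[of n "ii s" m] assms(1) by (simp add: shift)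
  have index_window: "1 \<le> j + m * r \<and> j + m * r \<le> r \<longleftrightarrow> m = - ((j - 1) div r)" for j m
    using int_window_shift_iff[of r j m] assms(2) by simp
  show "\<forall>p\<in>Inv r ii. to_index (to_value p) = p"
  proof
    fix p assume "p \<in> Inv r ii"
    then obtain s t where p: "p = (s, t)" "1 \<le> s" "s \<le> r"
      unfolding Inv_def by auto
    define q where "q = (ii s - 1) div n"
    have "(s - q * r - 1) div r = - q"
      using index_window[of "s - q * r" q] p by simp
    then show "to_index (to_value p) = p"
      by (simp add: to_index_def to_value_def p flip: q_def)
  qed
  show "\<forall>p\<in>value_window_inversions n ii. to_value (to_index p) = p"
  proof
    fix p assume "p \<in> value_window_inversions n ii"
    then obtain j l where p: "p = (j, l)" "1 \<le> ii j" "ii j \<le> n"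
      unfolding value_window_inversions_def by auto
    define q where "q = (j - 1) div r"
    have "(ii (j - q * r) - 1) div n = - q"
      using value_window[of "j - q * r" q] p by simp
    then show "to_value (to_index p) = p"
      by (simp add: to_index_def to_value_def p flip: q_def)
  qed
  show "to_value ` Inv r ii \<subseteq> value_window_inversions n ii"
  proof
    fix p assume "p \<in> to_value ` Inv r ii"
    then obtain s t where st: "s < t" "ii t \<le> ii s" and p: "p = to_value (s, t)"
      unfolding Inv_def by auto
    define q where "q = (ii s - 1) div n"
    show "p \<in> value_window_inversions n ii"
      using value_window[of s "- q"] shift[of s "- q"] shift[of t "- q"] st
      by (simp add: p to_value_def value_window_inversions_def flip: q_def)
  qed
  show "to_index ` value_window_inversions n ii \<subseteq> Inv r ii"
  proof
    fix p assume "p \<in> to_index ` value_window_inversions n ii"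
    then obtain j l where jl: "j < l" "ii l \<le> ii j" and p: "p = to_index (j, l)"
      unfolding value_window_inversions_def by auto
    define q where "q = (j - 1) div r"
    show "p \<in> Inv r ii"
      using index_window[of j "- q"] shift[of j "- q"] shift[of l "- q"] jl
      by (simp add: p to_index_def Inv_def flip: q_def)
  qed
qed

lemma has_sum_of_bool_finite:
  assumes "finite (A \<inter> G)"
  shows "((\<lambda>x. of_bool (x \<in> G) :: 'b::{comm_semiring_1, topological_space}) has_sum of_nat (card (A \<inter> G))) A"
  using assms by (intro has_sum_finite_neutralI[where B = "A \<inter> G"]) auto

lemma matA_product_eq_of_bool:
  "matA ii i j * matA ii k l = of_bool ((i, j, k, l) \<in> (\<lambda>(j, l). (ii j, j, ii l, l)) ` UNIV)"
  by (auto simp: matA_def)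

lemma dA_index_inter_matA_support:
  "dA_index n \<inter> (\<lambda>(j, l). (ii j, j, ii l, l)) ` UNIV
     = (\<lambda>(j, l). (ii j, j, ii l, l)) ` value_window_inversions n ii"
  by (auto simp: dA_index_def value_window_inversions_def)

lemma has_sum_dA_matA:
  assumes "finite (value_window_inversions n ii)"
  shows "((\<lambda>(i, j, k, l). matA ii i j * matA ii k l) has_sum card (value_window_inversions n ii))
           (dA_index n)"
proof -
  let ?graph = "\<lambda>(j, l). (ii j, j, ii l, l)"
  have "inj ?graph" by (auto intro: injI)
  then have "card (dA_index n \<inter> ?graph ` UNIV) = card (value_window_inversions n ii)"
    unfolding dA_index_inter_matA_support by (auto intro: card_image inj_on_subset)
  moreover have "finite (dA_index n \<inter> ?graph ` UNIV)"
    unfolding dA_index_inter_matA_support using assms by simp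
  ultimately show ?thesis
    using has_sum_of_bool_finite[where 'b = nat, of "dA_index n" "?graph ` UNIV"]
    by (simp add: matA_product_eq_of_bool case_prod_beta')
qed

theorem lemma3p1p4:
  fixes n r :: int and ii :: "int \<Rightarrow> int"
  assumes "n \<ge> 1" and "r \<ge> 1"
    and "\<And>k. ii (k + r) = ii k + n"
  shows "(\<lambda>(i, j, k, l). matA ii i j * matA ii k l) summable_on dA_index n \<and>
     finite (Inv r ii) \<and>
     dA n (matA ii) = card (Inv r ii)"
proof -
  have Inv_finite: "finite (Inv r ii)"
    using finite_Inv[of n r ii, OF assms] .
  obtain to_value where bij: "bij_betw to_value (Inv r ii) (value_window_inversions n ii)"
    using bij_betw_Inv_value_window_inversions[of n r ii, OF assms] by blast
  have "finite (value_window_inversions n ii)"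
    using Inv_finite bij_betw_finite[OF bij] by simp
  moreover have "card (value_window_inversions n ii) = card (Inv r ii)"
    using bij_betw_same_card[OF bij] by simp
  ultimately have "((\<lambda>(i, j, k, l). matA ii i j * matA ii k l) has_sum card (Inv r ii)) (dA_index n)"
    using has_sum_dA_matA[of n ii] by simp
  then show ?thesis
    using Inv_finite infsumI unfolding dA_def summable_on_def by blast
qed

end
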